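(* Let $K$ be an algebraically closed field and let $\omega = P\,dx + Q\,dy$ be a differential form with $P,Q \in K[x,y]$. If $\omega$ has a center at $a \in K^2$, then $d\omega(a) = 0$.
   Context: A differential form $\omega = P\,dx + Q\,dy$ has a zero at $a=(a_x,a_y)$ if $P(a)=Q(a)=0$. It has a center at $a$ if it has a zero at $a$ and there exist formal power series $\mu, F \in K[[x-a_x,\,y-a_y]]$ with $\mu(a) \neq 0$ and $dF = \mu\,\omega$. Here $d\omega = (Q_x - P_y)\,dx\wedge dy$ is the exterior derivative, and $d\omega(a)$ is its value at $a$. *)

theory Defs
  imports "HOL-Computational_Algebra.Computational_Algebra"
begin

text \<open>Bivariate polynomials K[x,y] are represented as 'a poly poly: the outer
variable is y, the coefficients are polynomials in x.  Bivariate formal power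
series K[[X,Y]] are represented as 'a fps fps (= K[[X]][[Y]]): outer variable Y,
coefficients are power series in X.\<close>

type_synonym 'a bpoly = "'a poly poly"
type_synonym 'a bfps = "'a fps fps"

definition bpoly_eval :: "'a::field bpoly \<Rightarrow> 'a \<times> 'a \<Rightarrow> 'a" where
  "bpoly_eval p a = poly (poly p [:snd a:]) (fst a)"

definition bpoly_dx :: "'a::field bpoly \<Rightarrow> 'a bpoly" where
  "bpoly_dx p = map_poly pderiv p"

definition bpoly_dy :: "'a::field bpoly \<Rightarrow> 'a bpoly" where
  "bpoly_dy p = pderiv p"

text \<open>Re-expansion of p around a: the polynomial p(x + a_x, y + a_y), i.e. p
written in the local coordinates X = x - a_x, Y = y - a_y.\<close>
definition bpoly_shift :: "'a::field bpoly \<Rightarrow> 'a \<times> 'a \<Rightarrow> 'a bpoly" where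
  "bpoly_shift p a = pcompose (map_poly (\<lambda>c. pcompose c [:fst a, 1:]) p) [:[:snd a:], 1:]"

definition bfps_of_bpoly :: "'a::field bpoly \<Rightarrow> 'a bfps" where
  "bfps_of_bpoly p = fps_of_poly (map_poly fps_of_poly p)"

definition bfps_dX :: "'a::field bfps \<Rightarrow> 'a bfps" where
  "bfps_dX F = Abs_fps (\<lambda>n. fps_deriv (fps_nth F n))"

definition bfps_dY :: "'a::field bfps \<Rightarrow> 'a bfps" where
  "bfps_dY F = fps_deriv F"

text \<open>Value at the origin X = Y = 0 (i.e. at the point a).\<close>
definition bfps_at0 :: "'a::field bfps \<Rightarrow> 'a" where
  "bfps_at0 F = fps_nth (fps_nth F 0) 0"

text \<open>The form \<omega> = P dx + Q dy is represented by the pair (P, Q).\<close>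
definition form_has_zero :: "'a::field bpoly \<Rightarrow> 'a bpoly \<Rightarrow> 'a \<times> 'a \<Rightarrow> bool" where
  "form_has_zero P Q a \<longleftrightarrow> bpoly_eval P a = 0 \<and> bpoly_eval Q a = 0"

definition form_has_center :: "'a::field bpoly \<Rightarrow> 'a bpoly \<Rightarrow> 'a \<times> 'a \<Rightarrow> bool" where
  "form_has_center P Q a \<longleftrightarrow> form_has_zero P Q a \<and>
     (\<exists>\<mu> F :: 'a bfps. bfps_at0 \<mu> \<noteq> 0 \<and>
        bfps_dX F = \<mu> * bfps_of_bpoly (bpoly_shift P a) \<and>
        bfps_dY F = \<mu> * bfps_of_bpoly (bpoly_shift Q a))"

text \<open>d\<omega> = (Q_x - P_y) dx\<and>dy; its value at a.\<close>
definition d_form_at :: "'a::field bpoly \<Rightarrow> 'a bpoly \<Rightarrow> 'a \<times> 'a \<Rightarrow> 'a" where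
  "d_form_at P Q a = bpoly_eval (bpoly_dx Q - bpoly_dy P) a"

end

theory Submission
  imports Defs
begin

text \<open>Comparing the coefficient of XY in the two expressions for the mixed second
derivative of F: it is \<mu>(0) P_y(a) by \<open>F_x = \<mu> P\<close> and \<mu>(0) Q_x(a) by \<open>F_y = \<mu> Q\<close>,
since P(a) = Q(a) = 0 kills the terms carrying the first-order coefficients of \<mu>.
As \<mu>(0) \<noteq> 0, this gives Q_x(a) = P_y(a).\<close>

lemma pcompose_of_nat_mult:
  "pcompose (of_nat k * p) q = of_nat k * pcompose p (q :: 'a::field poly)"
  by (simp add: of_nat_poly pcompose_smult)

lemma pderiv_map_poly_pcompose:
  "pderiv (map_poly (\<lambda>c. pcompose c r) p) = map_poly (\<lambda>c. pcompose c (r :: 'a::field poly)) (pderiv p)"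
  by (rule poly_eqI) (simp add: coeff_pderiv coeff_map_poly pcompose_of_nat_mult del: of_nat_Suc)

lemma poly_map_poly_pcompose_const:
  "poly (map_poly (\<lambda>c. pcompose c r) p) [:y:] = pcompose (poly p [:y:]) (r :: 'a::field poly)"
  by (induction p) (simp_all add: map_poly_pCons pcompose_add pcompose_mult pcompose_smult)

lemma pderiv_poly_const:
  "pderiv (poly p [:y:]) = poly (map_poly pderiv p) [:y :: 'a::field:]"
  by (induction p) (simp_all add: map_poly_pCons pderiv_add pderiv_mult pderiv_pCons pderiv_smult)

lemma coeff_1_eq_poly_pderiv_0: "coeff p 1 = poly (pderiv p) (0 :: 'a::idom)"
  by (simp add: poly_0_coeff_0 coeff_pderiv)

lemma coeff_pcompose_translate_0: "coeff (pcompose p [:x, 1:]) 0 = poly p (x :: 'a::field)"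
  by (simp add: poly_0_coeff_0[symmetric] poly_pcompose)

lemma coeff_pcompose_translate_1: "coeff (pcompose p [:x, 1:]) 1 = poly (pderiv p) (x :: 'a::field)"
  by (subst coeff_1_eq_poly_pderiv_0) (simp add: pderiv_pcompose poly_pcompose pderiv_pCons)

lemma coeff_bpoly_shift_0:
  "coeff (bpoly_shift p a) 0 = pcompose (poly p [:snd a:]) [:fst a, 1:]"
  by (simp add: bpoly_shift_def poly_0_coeff_0[symmetric] poly_pcompose poly_map_poly_pcompose_const)

lemma coeff_bpoly_shift_1:
  "coeff (bpoly_shift p a) 1 = pcompose (poly (pderiv p) [:snd a:]) [:fst a, 1:]"
  by (subst coeff_1_eq_poly_pderiv_0)
    (simp add: bpoly_shift_def pderiv_pcompose poly_pcompose pderiv_map_poly_pcompose poly_map_poly_pcompose_const pderiv_pCons)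

lemma coeff_bpoly_shift_0_0: "coeff (coeff (bpoly_shift p a) 0) 0 = bpoly_eval p a"
  by (simp add: coeff_bpoly_shift_0 coeff_pcompose_translate_0 bpoly_eval_def)

lemma coeff_bpoly_shift_1_0: "coeff (coeff (bpoly_shift p a) 1) 0 = bpoly_eval (bpoly_dy p) a"
  unfolding coeff_bpoly_shift_1 coeff_pcompose_translate_0 bpoly_eval_def bpoly_dy_def ..

lemma coeff_bpoly_shift_0_1: "coeff (coeff (bpoly_shift p a) 0) 1 = bpoly_eval (bpoly_dx p) a"
  unfolding coeff_bpoly_shift_0 coeff_pcompose_translate_1 bpoly_eval_def bpoly_dx_def
    pderiv_poly_const ..

lemma bfps_of_bpoly_nth: "bfps_of_bpoly p $ n $ m = coeff (coeff p n) m"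
  by (simp add: bfps_of_bpoly_def coeff_map_poly)

lemma bfps_dX_nth: "bfps_dX F $ n $ m = of_nat (Suc m) * F $ n $ Suc m"
  by (simp add: bfps_dX_def)

lemma bfps_dY_nth: "bfps_dY F $ n $ m = of_nat (Suc n) * F $ Suc n $ m"
  by (simp add: bfps_dY_def del: of_nat_Suc)

lemma bfps_mult_nth_1_0: "(A * B) $ 1 $ 0 = A $ 0 $ 0 * B $ 1 $ 0 + A $ 1 $ 0 * B $ 0 $ 0"
  by (simp add: fps_mult_nth_1)

lemma bfps_mult_nth_0_1: "(A * B) $ 0 $ 1 = A $ 0 $ 0 * B $ 0 $ 1 + A $ 0 $ 1 * B $ 0 $ 0"
  by (simp add: fps_mult_nth_1)

lemma form_has_center_imp_d_form_at_eq_0: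
  fixes P Q :: "'a::field bpoly"
  assumes "form_has_center P Q a"
  shows "d_form_at P Q a = 0"
proof -
  obtain \<mu> F :: "'a bfps" where \<mu>: "bfps_at0 \<mu> \<noteq> 0"
    and F_X: "bfps_dX F = \<mu> * bfps_of_bpoly (bpoly_shift P a)"
    and F_Y: "bfps_dY F = \<mu> * bfps_of_bpoly (bpoly_shift Q a)"
    and zero: "bpoly_eval P a = 0" "bpoly_eval Q a = 0"
    using assms unfolding form_has_center_def form_has_zero_def by blast
  have "bfps_dX F $ 1 $ 0 = bfps_dY F $ 0 $ 1"
    by (simp add: bfps_dX_nth bfps_dY_nth)
  then have "\<mu> $ 0 $ 0 * bpoly_eval (bpoly_dy P) a = \<mu> $ 0 $ 0 * bpoly_eval (bpoly_dx Q) a"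
    unfolding F_X F_Y bfps_mult_nth_1_0 bfps_mult_nth_0_1 bfps_of_bpoly_nth
      coeff_bpoly_shift_0_0 coeff_bpoly_shift_1_0 coeff_bpoly_shift_0_1 zero by simp
  with \<mu> show ?thesis
    by (simp add: bfps_at0_def d_form_at_def bpoly_eval_def bpoly_dx_def bpoly_dy_def)
qed

theorem mainTheorem1:
  fixes P Q :: "'a::alg_closed_field bpoly" and a :: "'a \<times> 'a"
  assumes "form_has_center P Q a"
  shows "d_form_at P Q a = 0"
  using assms by (rule form_has_center_imp_d_form_at_eq_0)

end
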